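(* The vector field $\xi$ is Killing with respect to $g$ (i.e. $\mathcal L_\xi g=0$, so that $(L,\varphi,\xi,\eta,g)$ is a K-contact B-metric manifold) if and only if $(L,\varphi,\xi,\eta,g)\in\mathcal{F}_1\oplus\mathcal{F}_8\oplus\mathcal{F}_{10}$.
   Context: Let $L$ be a 3-dimensional real connected Lie group with Lie algebra $\mathfrak l$, and let $\{E_0,E_1,E_2\}$ be a basis of left-invariant vector fields, with $[E_i,E_j]=C_{ij}^kE_k$. Define the left-invariant almost contact structure $(\varphi,\xi,\eta)$ by $\varphi E_0=0$, $\varphi E_1=E_2$, $\varphi E_2=-E_1$, $\xi=E_0$, $\eta(E_0)=1$, $\eta(E_1)=\eta(E_2)=0$, and the left-invariant pseudo-Riemannian metric $g$ by $g(E_0,E_0)=g(E_1,E_1)=-g(E_2,E_2)=1$, $g(E_i,E_j)=0$ for $i\neq j$. Let $\nabla$ be the Levi-Civita connection of $g$, $F(x,y,z)=g((\nabla_x\varphi)y,z)$, and $F_{ijk}=F(E_i,E_j,E_k)$. The manifold belongs to $\mathcal{F}_1\oplus\mathcal{F}_8\oplus\mathcal{F}_{10}$ iff all $F_{ijk}$ vanish except possibly $F_{111}=F_{122}$, $F_{211}=F_{222}$, $F_{101}=F_{110}=F_{202}=F_{220}$, and $F_{011}=F_{022}$. *)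

theory Defs
  imports Complex_Main
begin

text \<open>Left-invariant data on a 3-dimensional Lie group L, expressed on the Lie algebra
  with respect to the basis E0, E1, E2 (indices are natural numbers below 3).
  Structure constants: [E_i,E_j] = sum_k C i j k E_k.\<close>

definition lie_structure :: "(nat \<Rightarrow> nat \<Rightarrow> nat \<Rightarrow> real) \<Rightarrow> bool" where
  "lie_structure C \<longleftrightarrow>
     (\<forall>i<3. \<forall>j<3. \<forall>k<3. C i j k = - C j i k) \<and>
     (\<forall>i<3. \<forall>j<3. \<forall>k<3. \<forall>l<3.
        (\<Sum>m<3. C i j m * C m k l + C j k m * C m i l + C k i m * C m j l) = 0)"

definition gB :: "nat \<Rightarrow> nat \<Rightarrow> real" where
  "gB i j = (if i \<noteq> j then 0 else if i = 2 then -1 else 1)"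

text \<open>phi E_j = sum_k phiB j k E_k: phi E0 = 0, phi E1 = E2, phi E2 = -E1.\<close>
definition phiB :: "nat \<Rightarrow> nat \<Rightarrow> real" where
  "phiB j k = (if j = 1 \<and> k = 2 then 1 else if j = 2 \<and> k = 1 then -1 else 0)"

text \<open>Christoffel symbols of a left-invariant connection: nabla_{E_i} E_j = sum_k Gam i j k E_k.
  Levi-Civita: torsion-free and metric (for left-invariant fields, E_i(g(E_j,E_k)) = 0).\<close>
definition levi_civita :: "(nat \<Rightarrow> nat \<Rightarrow> nat \<Rightarrow> real) \<Rightarrow> (nat \<Rightarrow> nat \<Rightarrow> nat \<Rightarrow> real) \<Rightarrow> bool" where
  "levi_civita C Gam \<longleftrightarrow>
     (\<forall>i<3. \<forall>j<3. \<forall>k<3. Gam i j k - Gam j i k = C i j k) \<and>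
     (\<forall>i<3. \<forall>j<3. \<forall>k<3. (\<Sum>m<3. Gam i j m * gB m k) + (\<Sum>m<3. Gam i k m * gB j m) = 0)"

text \<open>F_ijk = g((nabla_{E_i} phi) E_j, E_k) = g(nabla_{E_i}(phi E_j) - phi(nabla_{E_i} E_j), E_k).\<close>
definition Fcomp :: "(nat \<Rightarrow> nat \<Rightarrow> nat \<Rightarrow> real) \<Rightarrow> nat \<Rightarrow> nat \<Rightarrow> nat \<Rightarrow> real" where
  "Fcomp Gam i j k =
     (\<Sum>b<3. ((\<Sum>a<3. phiB j a * Gam i a b) - (\<Sum>a<3. Gam i j a * phiB a b)) * gB b k)"

text \<open>Lie derivative of g along xi = E0 on left-invariant fields:
  (L_xi g)(E_i,E_j) = E0(g(E_i,E_j)) - g([E0,E_i],E_j) - g(E_i,[E0,E_j]),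
  where the first term vanishes since g(E_i,E_j) is constant.\<close>
definition lie_deriv_xi_g :: "(nat \<Rightarrow> nat \<Rightarrow> nat \<Rightarrow> real) \<Rightarrow> nat \<Rightarrow> nat \<Rightarrow> real" where
  "lie_deriv_xi_g C i j = - (\<Sum>m<3. C 0 i m * gB m j) - (\<Sum>m<3. C 0 j m * gB i m)"

definition xi_Killing :: "(nat \<Rightarrow> nat \<Rightarrow> nat \<Rightarrow> real) \<Rightarrow> bool" where
  "xi_Killing C \<longleftrightarrow> (\<forall>i<3. \<forall>j<3. lie_deriv_xi_g C i j = 0)"

definition F1810_support :: "(nat \<times> nat \<times> nat) set" where
  "F1810_support = {(1,1,1),(1,2,2),(2,1,1),(2,2,2),(1,0,1),(1,1,0),(2,0,2),(2,2,0),(0,1,1),(0,2,2)}"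

definition in_F1_F8_F10 :: "(nat \<Rightarrow> nat \<Rightarrow> nat \<Rightarrow> real) \<Rightarrow> bool" where
  "in_F1_F8_F10 F \<longleftrightarrow>
     (\<forall>i<3. \<forall>j<3. \<forall>k<3. (i,j,k) \<notin> F1810_support \<longrightarrow> F i j k = 0) \<and>
     F 1 1 1 = F 1 2 2 \<and> F 2 1 1 = F 2 2 2 \<and>
     F 1 0 1 = F 1 1 0 \<and> F 1 1 0 = F 2 0 2 \<and> F 2 0 2 = F 2 2 0 \<and>
     F 0 1 1 = F 0 2 2"

end

theory Submission
  imports Defs
begin

text \<open>
  Both conditions of the theorem turn out to be the same five linear conditions
  on the structure constants,
    C 0 1 0 = C 0 2 0 = C 0 1 1 = C 0 2 2 = 0  and  C 0 1 2 = C 0 2 1,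
  which we call the Killing conditions.

  For the Killing side this is immediate from the definition of the Lie derivative once the
  structure constants are normalised by skew-symmetry.  For the side of the classification we
  compute the Levi-Civita connection explicitly: the Koszul formula, proved abstractly for any
  metric, torsion-free connection in a frame, expresses the lowered Christoffel symbols
  g(\<nabla>_i E_j, E_k) through the lowered structure constants g([E_i,E_j], E_k).  Substituting
  into the definition of F gives the table of all 27 components F_ijk, from which membership
  in F1 + F8 + F10 is read off as the Killing conditions.
\<close>

lemma all_less_3: "(\<forall>i<(3::nat). P i) \<longleftrightarrow> P 0 \<and> P 1 \<and> P 2"
  by (auto simp: numeral_3_eq_3 numeral_2_eq_2 less_Suc_eq)

lemma sum_less_3: "(\<Sum>i<(3::nat). f i) = f 0 + f 1 + f 2"
  by (simp add: numeral_3_eq_3 numeral_2_eq_2)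

lemma koszul_formula:
  fixes G c :: "'a \<Rightarrow> 'a \<Rightarrow> 'a \<Rightarrow> real"
  assumes metric: "\<And>i j k. i \<in> I \<Longrightarrow> j \<in> I \<Longrightarrow> k \<in> I \<Longrightarrow> G i j k + G i k j = 0"
    and torsion_free: "\<And>i j k. i \<in> I \<Longrightarrow> j \<in> I \<Longrightarrow> k \<in> I \<Longrightarrow> G i j k - G j i k = c i j k"
    and "i \<in> I" "j \<in> I" "k \<in> I"
  shows "2 * G i j k = c i j k - c j k i + c k i j"
  using metric[of i j k] metric[of j k i] metric[of k i j]
    torsion_free[of i j k] torsion_free[of j k i] torsion_free[of k i j] assms(3-5)
  by linarith

text \<open>For a left-invariant vector-valued bilinear map T (e.g. the bracket or the connection),
  lower T i j k = g(T(E_i,E_j), E_k).\<close>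

definition lower :: "(nat \<Rightarrow> nat \<Rightarrow> nat \<Rightarrow> real) \<Rightarrow> nat \<Rightarrow> nat \<Rightarrow> nat \<Rightarrow> real" where
  "lower T i j k = (\<Sum>m<3. T i j m * gB m k)"

lemma lower_diagonal: "k < 3 \<Longrightarrow> lower T i j k = gB k k * T i j k"
  by (auto simp: lower_def sum_less_3 gB_def less_Suc_eq numeral_3_eq_3 numeral_2_eq_2)

lemma gB_symmetric: "gB i j = gB j i"
  by (simp add: gB_def)

lemma gB_square: "gB k k * gB k k = 1"
  by (simp add: gB_def)

text \<open>The Levi-Civita equations in lowered form are exactly the hypotheses of the Koszul
  formula; raising the index back recovers the Christoffel symbols.\<close>

lemma christoffel_formula:
  assumes "levi_civita C Gam" and "i < 3" "j < 3" "k < 3"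
  shows "Gam i j k = gB k k * (lower C i j k - lower C j k i + lower C k i j) / 2"
proof -
  have metric: "lower Gam a b c + lower Gam a c b = 0" if "a < 3" "b < 3" "c < 3" for a b c
  proof -
    have "(\<Sum>m<3. Gam a b m * gB m c) + (\<Sum>m<3. Gam a c m * gB b m) = 0"
      using assms(1) that unfolding levi_civita_def by blast
    then show ?thesis unfolding lower_def by (simp add: gB_symmetric[of b])
  qed
  have torsion_free: "lower Gam a b c - lower Gam b a c = lower C a b c"
    if "a < 3" "b < 3" "c < 3" for a b c
  proof -
    have "lower Gam a b c - lower Gam b a c = (\<Sum>m<3. (Gam a b m - Gam b a m) * gB m c)"
      by (simp add: lower_def sum_subtractf left_diff_distrib)
    also have "\<dots> = lower C a b c"
      using assms(1) that unfolding levi_civita_def lower_def by (intro sum.cong) auto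
    finally show ?thesis .
  qed
  have "2 * lower Gam i j k = lower C i j k - lower C j k i + lower C k i j"
    using koszul_formula[of "{..<3}" "lower Gam" "lower C"] metric torsion_free assms(2-4)
    by simp
  moreover have "Gam i j k = gB k k * lower Gam i j k"
    using lower_diagonal[OF assms(4)] gB_square[of k] by (simp add: mult.assoc[symmetric])
  ultimately show ?thesis by simp
qed

text \<open>Skew-symmetry of the bracket leaves nine independent structure constants
  C 0 1 k, C 0 2 k, C 1 2 k; these rules rewrite every other one into them.\<close>

lemma structure_constants_normal:
  assumes "lie_structure C" and "k < 3"
  shows "C 0 0 k = 0" "C 1 1 k = 0" "C 2 2 k = 0"
    and "C 1 0 k = - C 0 1 k" "C 2 0 k = - C 0 2 k" "C 2 1 k = - C 1 2 k"
proof -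
  have skew: "C a b k = - C b a k" if "a < 3" "b < 3" for a b
    using assms that unfolding lie_structure_def by blast
  show "C 0 0 k = 0" "C 1 1 k = 0" "C 2 2 k = 0"
    and "C 1 0 k = - C 0 1 k" "C 2 0 k = - C 0 2 k" "C 2 1 k = - C 1 2 k"
    using skew[of 0 0] skew[of 1 1] skew[of 2 2] skew[of 1 0] skew[of 2 0] skew[of 2 1]
    by simp_all
qed

definition killing_conditions :: "(nat \<Rightarrow> nat \<Rightarrow> nat \<Rightarrow> real) \<Rightarrow> bool" where
  "killing_conditions C \<longleftrightarrow>
     C 0 1 0 = 0 \<and> C 0 2 0 = 0 \<and> C 0 1 1 = 0 \<and> C 0 2 2 = 0 \<and> C 0 1 2 = C 0 2 1"

text \<open>(L_\<xi> g)(E_i,E_j) = -g([E_0,E_i],E_j) - g(E_i,[E_0,E_j]) vanishes exactly under the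
  Killing conditions (the diagonal entries give C 0 1 1 = C 0 2 2 = 0, the others the rest).\<close>

lemma xi_Killing_iff:
  assumes "lie_structure C"
  shows "xi_Killing C \<longleftrightarrow> killing_conditions C"
  using structure_constants_normal[OF assms]
  unfolding xi_Killing_def lie_deriv_xi_g_def killing_conditions_def all_less_3 sum_less_3 gB_def
  by auto

lemma F_components:
  assumes "lie_structure C" and "levi_civita C Gam"
  shows
    "Fcomp Gam 0 0 0 = 0"   "Fcomp Gam 0 0 1 = C 0 2 0"   "Fcomp Gam 0 0 2 = - C 0 1 0"
    "Fcomp Gam 0 1 0 = C 0 2 0"   "Fcomp Gam 0 1 1 = C 0 1 2 + C 0 2 1 + C 1 2 0"
    "Fcomp Gam 0 1 2 = 0"   "Fcomp Gam 0 2 0 = - C 0 1 0"   "Fcomp Gam 0 2 1 = 0"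
    "Fcomp Gam 0 2 2 = C 0 1 2 + C 0 2 1 + C 1 2 0"
    "Fcomp Gam 1 0 0 = 0"   "Fcomp Gam 1 0 1 = (- C 0 1 2 + C 0 2 1 + C 1 2 0) / 2"
    "Fcomp Gam 1 0 2 = - C 0 1 1"   "Fcomp Gam 1 1 0 = (- C 0 1 2 + C 0 2 1 + C 1 2 0) / 2"
    "Fcomp Gam 1 1 1 = 2 * C 1 2 1"   "Fcomp Gam 1 1 2 = 0"   "Fcomp Gam 1 2 0 = - C 0 1 1"
    "Fcomp Gam 1 2 1 = 0"   "Fcomp Gam 1 2 2 = 2 * C 1 2 1"
    "Fcomp Gam 2 0 0 = 0"   "Fcomp Gam 2 0 1 = - C 0 2 2"
    "Fcomp Gam 2 0 2 = (C 0 1 2 - C 0 2 1 + C 1 2 0) / 2"   "Fcomp Gam 2 1 0 = - C 0 2 2"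
    "Fcomp Gam 2 1 1 = - 2 * C 1 2 2"   "Fcomp Gam 2 1 2 = 0"
    "Fcomp Gam 2 2 0 = (C 0 1 2 - C 0 2 1 + C 1 2 0) / 2"
    "Fcomp Gam 2 2 1 = 0"   "Fcomp Gam 2 2 2 = - 2 * C 1 2 2"
  using structure_constants_normal[OF assms(1)]
  by (simp_all add: Fcomp_def sum_less_3 christoffel_formula[OF assms(2)] lower_diagonal
      gB_def phiB_def)
    (simp_all add: field_simps)

lemma F1_F8_F10_iff:
  assumes "lie_structure C" and "levi_civita C Gam"
  shows "in_F1_F8_F10 (Fcomp Gam) \<longleftrightarrow> killing_conditions C"
  unfolding in_F1_F8_F10_def F1810_support_def killing_conditions_def all_less_3
    F_components[OF assms]
  by auto

theorem theorem2p6: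
  fixes C Gam :: "nat \<Rightarrow> nat \<Rightarrow> nat \<Rightarrow> real"
  assumes "lie_structure C"
    and "levi_civita C Gam"
  shows "xi_Killing C \<longleftrightarrow> in_F1_F8_F10 (Fcomp Gam)"
  using xi_Killing_iff[OF assms(1)] F1_F8_F10_iff[OF assms] by simp

end
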